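(* The group $\overline{\phi}(\mathcal{B})\cap\mathrm{PGL}(2,\mathbb{Z}[t,t^{-1}])$ contains $U^1$.
   Context: For a Laurent polynomial or matrix in $t$, the bar denotes substitution $t\mapsto t^{-1}$; $\Phi=1+t^{-1}+t$. Let $J_3=\begin{pmatrix}1&-t^{-1}&-t^{-1}\\-t&1&-t^{-1}\\-t&-t&1\end{pmatrix}$, $v=(t,t^2,t^3)$ (a row vector), $\vec{1}=(1,1,1)^T$, and $\mathcal{B}=\{A\in\mathrm{GL}(3,\mathbb{Z}[t,t^{-1}]) : vA=v,\ A\vec 1=\vec 1,\ \overline{A}J_3A^T=J_3\}$. For $A=(A_{ij})\in\mathcal{B}$ put, for $k=1,2$, $f_{k1}=A_{k1}(1+t+t^2)-1$, $f_{k2}=A_{k1}+A_{k2}(1+t)-1$, $g_{kl}=f_{kl}/(t(1+t))$, $\phi(A)=\begin{pmatrix}g_{11}&g_{12}\\ t^{-1}g_{11}+(1+t)g_{21}& t^{-1}g_{12}+(1+t)g_{22}\end{pmatrix}$, and $\overline{\phi}(A)$ its class in $\mathrm{PGL}(2,\mathbb{Q}(t))$. All projective groups are viewed inside $\mathrm{PGL}(2,\mathbb{Q}(t))$. The quaternionic group $\mathcal{Q}$ is the set of elements of $\mathrm{PGL}(2,\mathbb{Q}[t,t^{-1}])$ having a representative of the form $\begin{pmatrix}g_1&g_2\\-\Phi\overline{g_2}&\overline{g_1}\end{pmatrix}$ with $g_1,g_2\in\mathbb{Q}[t,t^{-1}]$; $U=\mathcal{Q}\cap\mathrm{PGL}(2,\mathbb{Z}[t,t^{-1}])$,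 and $U^1$ is the subgroup of elements of $U$ having a representative $B$ with $\det B=1$. *)

theory Defs
  imports "HOL-Analysis.Analysis" "HOL-Computational_Algebra.Formal_Laurent_Series"
begin

text \<open>Ambient field: formal Laurent series over the rationals in the variable t = fls_X.\<close>

type_synonym K = "rat fls"

definition laurentQ :: "K set" where
  "laurentQ = {f. finite {n. fls_nth f n \<noteq> 0}}"

definition laurentZ :: "K set" where
  "laurentZ = {f. f \<in> laurentQ \<and> (\<forall>n. fls_nth f n \<in> \<int>)}"

definition ratfun :: "K set" where
  "ratfun = {f. \<exists>p q. p \<in> laurentQ \<and> q \<in> laurentQ \<and> q \<noteq> 0 \<and> f = p / q}"

definition lbar :: "K \<Rightarrow> K" where
  "lbar f = Abs_fls (\<lambda>n. fls_nth f (- n))"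

definition Phi :: K where
  "Phi = 1 + fls_X_inv + fls_X"

definition matbar :: "K^'n^'m \<Rightarrow> K^'n^'m" where
  "matbar A = (\<chi> i j. lbar (A $ i $ j))"

definition GLm :: "K set \<Rightarrow> (K^'n^'n) set" where
  "GLm R = {A. (\<forall>i j. A $ i $ j \<in> R) \<and>
     (\<exists>B. (\<forall>i j. B $ i $ j \<in> R) \<and> A ** B = mat 1 \<and> B ** A = mat 1)}"

definition J3 :: "K^3^3" where
  "J3 = vector [vector [1, - fls_X_inv, - fls_X_inv],
                vector [- fls_X, 1, - fls_X_inv],
                vector [- fls_X, - fls_X, 1]]"

definition vrow :: "K^3" where
  "vrow = vector [fls_X, fls_X ^ 2, fls_X ^ 3]"

definition one3 :: "K^3" where
  "one3 = vector [1, 1, 1]"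

definition calB :: "(K^3^3) set" where
  "calB = {A. A \<in> GLm laurentZ \<and> vrow v* A = vrow \<and> A *v one3 = one3
             \<and> matbar A ** J3 ** transpose A = J3}"

text \<open>The map phi; indices 1,2 of type 3 are the first two rows/columns.\<close>
definition phi :: "K^3^3 \<Rightarrow> K^2^2" where
  "phi A = (let t = fls_X :: K;
     f11 = A$1$1 * (1 + t + t^2) - 1;
     f12 = A$1$1 + A$1$2 * (1 + t) - 1;
     f21 = A$2$1 * (1 + t + t^2) - 1;
     f22 = A$2$1 + A$2$2 * (1 + t) - 1;
     g11 = f11 / (t * (1 + t)); g12 = f12 / (t * (1 + t));
     g21 = f21 / (t * (1 + t)); g22 = f22 / (t * (1 + t))
   in vector [vector [g11, g12],
              vector [fls_X_inv * g11 + (1 + t) * g21, fls_X_inv * g12 + (1 + t) * g22]])"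

text \<open>Projective classes: an element of PGL(2, -) is the set of all nonzero scalar
  multiples of a representative.\<close>
definition pclass :: "K^2^2 \<Rightarrow> (K^2^2) set" where
  "pclass M = {N. \<exists>c. c \<noteq> 0 \<and> N = (\<chi> i j. c * M $ i $ j)}"

definition PGL2 :: "K set \<Rightarrow> (K^2^2) set set" where
  "PGL2 R = pclass ` GLm R"

definition quatQ :: "(K^2^2) set set" where
  "quatQ = {x \<in> PGL2 laurentQ. \<exists>g1 g2. g1 \<in> laurentQ \<and> g2 \<in> laurentQ \<and>
     x = pclass (vector [vector [g1, g2], vector [- Phi * lbar g2, lbar g1]])}"

definition UZ :: "(K^2^2) set set" where
  "UZ = quatQ \<inter> PGL2 laurentZ"

definition U1 :: "(K^2^2) set set" where
  "U1 = {x \<in> UZ. \<exists>B. B \<in> GLm ratfun \<and> x = pclass B \<and> det B = 1}"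

definition phibar :: "K^3^3 \<Rightarrow> (K^2^2) set" where
  "phibar A = pclass (phi A)"

end

theory Submission
  imports Defs
begin

text \<open>An element of \<open>U\<^sup>1\<close> has a representative \<open>B = [[x, y], [-\<Phi> y\<^sup>-, x\<^sup>-]]\<close> with
  \<open>x, y \<in> \<int>[t, t\<^sup>-\<^sup>1]\<close> and \<open>x x\<^sup>- + \<Phi> y y\<^sup>- = 1\<close>: a determinant-one representative differs from
  an integral one by a scalar whose square is a unit \<open>\<plusminus>t\<^sup>n\<close>, and the sign of the quaternionic
  form is fixed by evaluating at \<open>t = 1\<close>. At a primitive cube root of unity \<open>\<zeta>\<close> we have
  \<open>\<Phi>(\<zeta>) = 0\<close>, so \<open>x(\<zeta>)\<close> is a unit of \<open>\<int>[\<zeta>]\<close>, and a unit \<open>u = \<plusminus>t\<^sup>k\<close> makes \<open>1 - u x\<close>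
  divisible by \<open>1 + t + t\<^sup>2\<close>; likewise \<open>x + t x\<^sup>-\<close> and \<open>y\<^sup>- - y\<close> are divisible by \<open>1 + t\<close>. The
  quotients are the entries of an explicit integral matrix \<open>A = T D T\<^sup>-\<^sup>1\<close> with
  \<open>D = diag(1, u B)\<close>. The form \<open>J\<^sub>3\<close> is congruent via \<open>T\<close> to a diagonal form preserved by \<open>D\<close>, so
  \<open>A \<in> \<B>\<close>, and \<open>\<phi>(A) = u B\<close>.\<close>

no_notation fps_nth (infixl \<open>$\<close> 75)
notation fls_nth (infixl \<open>$$\<close> 75)

section \<open>Laurent polynomials\<close>

definition lmonom :: "rat \<Rightarrow> int \<Rightarrow> K" where
  "lmonom c n = fls_shift (-n) (fls_const c)"

lemma lmonom_nth [simp]: "lmonom c n $$ m = (if m = n then c else 0)"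
  by (simp add: lmonom_def)

lemma lmonom_mult_nth: "(lmonom c n * q) $$ m = c * q $$ (m - n)"
  by (simp add: lmonom_def fls_shifted_times_simps)

lemma lmonom_mult_lmonom: "lmonom c n * lmonom d m = lmonom (c * d) (n + m)"
  by (rule fls_eqI) (simp add: lmonom_mult_nth)

lemma lmonom_uminus: "- lmonom c n = lmonom (- c) n"
  by (rule fls_eqI) simp

lemma lmonom_1_0: "lmonom 1 0 = 1"
  by (rule fls_eqI) simp

lemma lmonom_eq_1_iff: "lmonom c n = 1 \<longleftrightarrow> c = 1 \<and> n = 0"
proof
  assume "lmonom c n = 1"
  then have "lmonom c n $$ 0 = 1" by simp
  then show "c = 1 \<and> n = 0" by (simp split: if_splits)
qed (simp add: lmonom_1_0)

lemma fls_X_eq_lmonom: "fls_X = lmonom 1 1"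
  by (rule fls_eqI) simp

lemma fls_X_inv_eq_lmonom: "fls_X_inv = lmonom 1 (-1)"
  by (rule fls_eqI) simp

lemma laurentQ_iff: "f \<in> laurentQ \<longleftrightarrow> finite {n. f $$ n \<noteq> 0}"
  by (simp add: laurentQ_def)

lemma laurentZ_iff: "f \<in> laurentZ \<longleftrightarrow> finite {n. f $$ n \<noteq> 0} \<and> (\<forall>n. f $$ n \<in> \<int>)"
  by (simp add: laurentZ_def laurentQ_def)

lemma laurentZ_imp_laurentQ: "f \<in> laurentZ \<Longrightarrow> f \<in> laurentQ"
  by (simp add: laurentZ_def)

lemma laurent_support_induct:
  assumes "finite {n. f $$ n \<noteq> 0}" "\<forall>n. f $$ n \<in> R" "0 \<in> R" "P 0"
    and step: "\<And>c n g. c \<in> R \<Longrightarrow> finite {n. g $$ n \<noteq> 0} \<Longrightarrow> \<forall>n. g $$ n \<in> R \<Longrightarrow> P g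
      \<Longrightarrow> P (lmonom c n + g)"
  shows "P f"
  using assms(1,2)
proof (induction "card {n. f $$ n \<noteq> 0}" arbitrary: f)
  case 0
  then have "f = 0" by (auto intro: fls_zero_eqI)
  then show ?case using \<open>P 0\<close> by simp
next
  case (Suc k f)
  then obtain n where n: "f $$ n \<noteq> 0" by fastforce
  define g where "g = f - lmonom (f $$ n) n"
  have supp_g: "{m. g $$ m \<noteq> 0} = {m. f $$ m \<noteq> 0} - {n}"
    by (auto simp: g_def)
  have g: "finite {m. g $$ m \<noteq> 0}" "\<forall>m. g $$ m \<in> R"
    using Suc.prems \<open>0 \<in> R\<close> by (simp_all add: supp_g) (simp add: g_def)
  have "card {m. g $$ m \<noteq> 0} = k"
    using Suc.hyps(2) Suc.prems(1) n by (simp add: supp_g)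
  then have "P g" using Suc.hyps(1) g by blast
  then have "P (lmonom (f $$ n) n + g)"
    using Suc.prems g by (intro step) auto
  then show ?case by (simp add: g_def)
qed

lemma laurentQ_induct [consumes 1, case_names zero step]:
  assumes "f \<in> laurentQ" "P 0"
    and "\<And>c n g. g \<in> laurentQ \<Longrightarrow> P g \<Longrightarrow> P (lmonom c n + g)"
  shows "P f"
  by (rule laurent_support_induct[of f UNIV]) (use assms in \<open>auto simp: laurentQ_iff\<close>)

lemma laurentZ_induct [consumes 1, case_names zero step]:
  assumes "f \<in> laurentZ" "P 0"
    and "\<And>c n g. c \<in> \<int> \<Longrightarrow> g \<in> laurentZ \<Longrightarrow> P g \<Longrightarrow> P (lmonom c n + g)"
  shows "P f"
  by (rule laurent_support_induct[of f \<int>]) (use assms in \<open>auto simp: laurentZ_iff\<close>)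

lemma laurentQ_0 [simp]: "0 \<in> laurentQ"
  and laurentZ_0 [simp]: "0 \<in> laurentZ"
  by (simp_all add: laurentZ_iff laurentQ_iff)

lemma laurentQ_lmonom [simp]: "lmonom c n \<in> laurentQ"
  unfolding laurentQ_iff by (rule finite_subset[of _ "{n}"]) auto

lemma laurentZ_lmonom [simp]: "c \<in> \<int> \<Longrightarrow> lmonom c n \<in> laurentZ"
  by (simp add: laurentZ_def)

lemma laurentQ_add [simp]: "f \<in> laurentQ \<Longrightarrow> g \<in> laurentQ \<Longrightarrow> f + g \<in> laurentQ"
  unfolding laurentQ_iff
  by (rule finite_subset[of _ "{n. f $$ n \<noteq> 0} \<union> {n. g $$ n \<noteq> 0}"]) auto

lemma laurentQ_uminus [simp]: "f \<in> laurentQ \<Longrightarrow> - f \<in> laurentQ"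
  by (simp add: laurentQ_iff)

lemma laurentQ_diff [simp]: "f \<in> laurentQ \<Longrightarrow> g \<in> laurentQ \<Longrightarrow> f - g \<in> laurentQ"
  using laurentQ_add[of f "- g"] by simp

lemma laurentZ_add [simp]: "f \<in> laurentZ \<Longrightarrow> g \<in> laurentZ \<Longrightarrow> f + g \<in> laurentZ"
  by (simp add: laurentZ_def)

lemma laurentZ_uminus [simp]: "f \<in> laurentZ \<Longrightarrow> - f \<in> laurentZ"
  by (simp add: laurentZ_def)

lemma laurentZ_diff [simp]: "f \<in> laurentZ \<Longrightarrow> g \<in> laurentZ \<Longrightarrow> f - g \<in> laurentZ"
  using laurentZ_add[of f "- g"] by simp

lemma laurentQ_lmonom_mult: "g \<in> laurentQ \<Longrightarrow> lmonom c n * g \<in> laurentQ"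
  unfolding laurentQ_iff
  by (rule finite_subset[of _ "(\<lambda>k. k + n) ` {m. g $$ m \<noteq> 0}"])
     (auto simp: lmonom_mult_nth image_iff, metis diff_add_cancel)

lemma laurentZ_lmonom_mult: "c \<in> \<int> \<Longrightarrow> g \<in> laurentZ \<Longrightarrow> lmonom c n * g \<in> laurentZ"
  by (simp add: laurentZ_def laurentQ_lmonom_mult lmonom_mult_nth)

lemma laurentQ_mult [simp]: "f \<in> laurentQ \<Longrightarrow> g \<in> laurentQ \<Longrightarrow> f * g \<in> laurentQ"
  by (induction f rule: laurentQ_induct) (simp_all add: distrib_right laurentQ_lmonom_mult)

lemma laurentZ_mult [simp]: "f \<in> laurentZ \<Longrightarrow> g \<in> laurentZ \<Longrightarrow> f * g \<in> laurentZ"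
  by (induction f rule: laurentZ_induct) (simp_all add: distrib_right laurentZ_lmonom_mult)

lemma laurentZ_1 [simp]: "1 \<in> laurentZ"
  by (metis laurentZ_lmonom Ints_1 lmonom_1_0)

lemma laurentZ_X [simp]: "fls_X \<in> laurentZ"
  by (simp add: fls_X_eq_lmonom)

lemma laurentZ_X_inv [simp]: "fls_X_inv \<in> laurentZ"
  by (simp add: fls_X_inv_eq_lmonom)

lemma laurentZ_power [simp]: "f \<in> laurentZ \<Longrightarrow> f ^ n \<in> laurentZ"
  by (induction n) auto

lemma laurentQ_1 [simp]: "1 \<in> laurentQ"
  and laurentQ_X [simp]: "fls_X \<in> laurentQ"
  and laurentQ_X_inv [simp]: "fls_X_inv \<in> laurentQ"
  by (simp_all add: laurentZ_imp_laurentQ)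

lemma laurentQ_power [simp]: "f \<in> laurentQ \<Longrightarrow> f ^ n \<in> laurentQ"
  by (induction n) auto

lemma laurentQ_support_bounded:
  assumes "p \<in> laurentQ" obtains B where "\<And>m. m < -B \<or> B < m \<Longrightarrow> p $$ m = 0"
proof -
  obtain B where B: "abs ` {n. p $$ n \<noteq> 0} \<subseteq> {..B}"
    using assms by (auto simp: laurentQ_iff finite_int_iff_bounded_le)
  have "p $$ m = 0" if "m < -B \<or> B < m" for m
    using that B by (cases "p $$ m = 0") auto
  then show ?thesis by (rule that)
qed

lemma lbar_nth [simp]: "f \<in> laurentQ \<Longrightarrow> lbar f $$ n = f $$ (- n)"
proof -
  assume "f \<in> laurentQ"
  then have "finite (int -` {n. f $$ n \<noteq> 0})"
    by (intro finite_vimageI) (auto simp: laurentQ_iff)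
  then show ?thesis
    unfolding lbar_def by (intro nth_Abs_fls_finite_nonzero_neg_nth) simp
qed

lemma laurentQ_lbar [simp]: "f \<in> laurentQ \<Longrightarrow> lbar f \<in> laurentQ"
proof -
  assume f: "f \<in> laurentQ"
  then have "{n. lbar f $$ n \<noteq> 0} = uminus -` {n. f $$ n \<noteq> 0}" by auto
  moreover have "finite (uminus -` {n. f $$ n \<noteq> 0})"
    using f by (intro finite_vimageI) (auto simp: laurentQ_iff)
  ultimately show ?thesis by (simp add: laurentQ_iff)
qed

lemma laurentZ_lbar [simp]: "f \<in> laurentZ \<Longrightarrow> lbar f \<in> laurentZ"
  by (simp add: laurentZ_def)

lemma lbar_add: "f \<in> laurentQ \<Longrightarrow> g \<in> laurentQ \<Longrightarrow> lbar (f + g) = lbar f + lbar g"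
  and lbar_diff: "f \<in> laurentQ \<Longrightarrow> g \<in> laurentQ \<Longrightarrow> lbar (f - g) = lbar f - lbar g"
  and lbar_lbar [simp]: "f \<in> laurentQ \<Longrightarrow> lbar (lbar f) = f"
  and lbar_lmonom: "lbar (lmonom c n) = lmonom c (- n)"
  by (auto intro!: fls_eqI)

lemma lbar_0 [simp]: "lbar 0 = 0"
  by (rule fls_eqI) simp

lemma lbar_eq_0_iff: "f \<in> laurentQ \<Longrightarrow> lbar f = 0 \<longleftrightarrow> f = 0"
  by (metis lbar_0 lbar_lbar)

lemma lbar_lmonom_mult: "g \<in> laurentQ \<Longrightarrow> lbar (lmonom c n * g) = lmonom c (- n) * lbar g"
  by (rule fls_eqI) (simp add: laurentQ_lmonom_mult lmonom_mult_nth)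

lemma lbar_mult: "f \<in> laurentQ \<Longrightarrow> g \<in> laurentQ \<Longrightarrow> lbar (f * g) = lbar f * lbar g"
proof (induction f rule: laurentQ_induct)
  case (step c n h)
  then show ?case
    by (simp add: distrib_right lbar_add laurentQ_lmonom_mult lbar_lmonom_mult lbar_lmonom)
qed simp

lemma lbar_power: "f \<in> laurentQ \<Longrightarrow> lbar (f ^ n) = lbar f ^ n"
  by (induction n) (simp_all add: lbar_mult lbar_lmonom flip: lmonom_1_0)

lemma lbar_1 [simp]: "lbar 1 = 1"
  and lbar_X [simp]: "lbar fls_X = fls_X_inv"
  and lbar_X_inv [simp]: "lbar fls_X_inv = fls_X"
  by (simp_all add: fls_X_eq_lmonom fls_X_inv_eq_lmonom lbar_lmonom flip: lmonom_1_0)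

section \<open>Evaluation and divisibility\<close>

text \<open>Only meaningful on Laurent polynomials: for infinite support the sum is \<open>0\<close>.\<close>

definition leval :: "'a::field_char_0 \<Rightarrow> K \<Rightarrow> 'a" where
  "leval z f = (\<Sum>n | f $$ n \<noteq> 0. of_rat (f $$ n) * z powi n)"

lemma leval_eq_sum:
  "finite F \<Longrightarrow> {n. f $$ n \<noteq> 0} \<subseteq> F \<Longrightarrow> leval z f = (\<Sum>n\<in>F. of_rat (f $$ n) * z powi n)"
  unfolding leval_def by (rule sum.mono_neutral_left) auto

lemma leval_0 [simp]: "leval z 0 = 0"
  by (simp add: leval_def)

lemma leval_add: "f \<in> laurentQ \<Longrightarrow> g \<in> laurentQ \<Longrightarrow> leval z (f + g) = leval z f + leval z g"
proof -
  assume "f \<in> laurentQ" "g \<in> laurentQ"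
  then have F: "finite ({n. f $$ n \<noteq> 0} \<union> {n. g $$ n \<noteq> 0})" (is "finite ?F")
    by (simp add: laurentQ_iff)
  have "leval z (f + g) = (\<Sum>n\<in>?F. of_rat (f $$ n) * z powi n + of_rat (g $$ n) * z powi n)"
    by (subst leval_eq_sum[OF F]) (auto simp: of_rat_add distrib_right)
  also have "\<dots> = leval z f + leval z g"
    by (simp add: sum.distrib leval_eq_sum[OF F])
  finally show ?thesis .
qed

lemma leval_uminus: "leval z (- f) = - leval z f"
  by (simp add: leval_def of_rat_minus sum_negf)

lemma leval_diff: "f \<in> laurentQ \<Longrightarrow> g \<in> laurentQ \<Longrightarrow> leval z (f - g) = leval z f - leval z g"
  using leval_add[of f "- g" z] by (simp add: leval_uminus)

lemma leval_lmonom: "leval z (lmonom c n) = of_rat c * z powi n"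
  by (subst leval_eq_sum[of "{n}"]) auto

lemma leval_lmonom_mult:
  assumes "z \<noteq> 0" "g \<in> laurentQ"
  shows "leval z (lmonom c n * g) = of_rat c * z powi n * leval z g"
proof -
  define G where "G = {m. g $$ m \<noteq> 0}"
  have G: "finite G" using assms(2) by (simp add: G_def laurentQ_iff)
  have "leval z (lmonom c n * g) = (\<Sum>m\<in>(\<lambda>k. k + n) ` G. of_rat ((lmonom c n * g) $$ m) * z powi m)"
    using G by (intro leval_eq_sum) (auto simp: G_def lmonom_mult_nth image_iff, metis diff_add_cancel)
  also have "\<dots> = (\<Sum>k\<in>G. of_rat c * z powi n * (of_rat (g $$ k) * z powi k))"
    using assms(1)
    by (simp add: sum.reindex lmonom_mult_nth) (simp add: of_rat_mult power_int_add mult_ac)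
  also have "\<dots> = of_rat c * z powi n * leval z g"
    by (simp add: sum_distrib_left leval_def G_def)
  finally show ?thesis .
qed

lemma leval_mult:
  assumes "z \<noteq> 0" "f \<in> laurentQ" "g \<in> laurentQ"
  shows "leval z (f * g) = leval z f * leval z g"
  using assms(2)
proof (induction f rule: laurentQ_induct)
  case (step c n h)
  then show ?case
    using assms(1,3)
    by (simp add: distrib_right leval_add laurentQ_lmonom_mult leval_lmonom_mult leval_lmonom)
qed simp

lemma leval_1 [simp]: "leval z 1 = 1"
  and leval_X [simp]: "leval z fls_X = z"
  and leval_X_inv [simp]: "leval z fls_X_inv = inverse z"
  by (simp_all add: leval_lmonom fls_X_eq_lmonom fls_X_inv_eq_lmonom power_int_minus
      flip: lmonom_1_0)

lemma leval_lbar: "f \<in> laurentQ \<Longrightarrow> leval z (lbar f) = leval (inverse z) f"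
proof -
  assume f: "f \<in> laurentQ"
  define G where "G = {m. f $$ m \<noteq> 0}"
  have G: "finite G" using f by (simp add: G_def laurentQ_iff)
  have "leval z (lbar f) = (\<Sum>m\<in>uminus ` G. of_rat (lbar f $$ m) * z powi m)"
    using f G by (intro leval_eq_sum) (auto simp: G_def image_iff, metis minus_minus)
  also have "\<dots> = leval (inverse z) f"
    using f by (simp add: sum.reindex leval_def G_def power_int_minus power_int_inverse)
  finally show ?thesis .
qed

text \<open>Euclidean division from the bottom: subtracting \<open>p\<^sub>n t\<^sup>n d\<close> kills the lowest coefficient
  of \<open>p\<close> without changing its value at \<open>z\<close>, until the support of \<open>p\<close> is shorter than \<open>k\<close>,
  where the hypothesis \<open>short\<close> forces \<open>p = 0\<close>.\<close>

lemma laurentZ_dvd_if_leval_eq_0: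
  fixes z :: "'a::field_char_0"
  assumes d: "d \<in> laurentZ" "d $$ 0 = 1" "\<forall>m<0. d $$ m = 0" "\<forall>m>k. d $$ m = 0" "1 \<le> k"
    and z: "z \<noteq> 0" "leval z d = 0"
    and short: "\<And>p n. p \<in> laurentZ \<Longrightarrow> \<forall>m. m < n \<or> n + k \<le> m \<longrightarrow> p $$ m = 0 \<Longrightarrow>
      leval z p = 0 \<Longrightarrow> p = 0"
    and p: "p \<in> laurentZ" "leval z p = 0"
  shows "\<exists>q\<in>laurentZ. p = d * q"
proof -
  have "\<exists>q\<in>laurentZ. p = d * q"
    if "p \<in> laurentZ" "leval z p = 0" "\<forall>m. m < n \<or> N < m \<longrightarrow> p $$ m = 0" for p n N
    using that
  proof (induction "nat (N - n)" arbitrary: p n rule: less_induct)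
    case less
    show ?case
    proof (cases "N < n + k")
      case True
      then have "p = 0" using short less.prems by force
      then show ?thesis by auto
    next
      case False
      define c where "c = p $$ n"
      have c: "c \<in> \<int>" using less.prems(1) by (simp add: c_def laurentZ_iff)
      define p' where "p' = p - lmonom c n * d"
      have p': "p' \<in> laurentZ" using less.prems(1) c d(1) by (simp add: p'_def laurentZ_lmonom_mult)
      have "leval z p' = 0"
        using less.prems(1,2) d(1) z
        by (simp add: p'_def leval_diff laurentZ_imp_laurentQ laurentQ_lmonom_mult leval_lmonom_mult)
      moreover have "\<forall>m. m < n + 1 \<or> N < m \<longrightarrow> p' $$ m = 0"
      proof (intro allI impI)
        fix m assume m: "m < n + 1 \<or> N < m"
        have "p' $$ m = p $$ m - c * d $$ (m - n)" by (simp add: p'_def lmonom_mult_nth)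
        then show "p' $$ m = 0"
          using m less.prems(3) d(2-4) False by (cases "m = n") (auto simp: c_def)
      qed
      moreover have "nat (N - (n + 1)) < nat (N - n)" using False d(5) by linarith
      ultimately obtain q' where "q' \<in> laurentZ" "p' = d * q'"
        using less.hyps p' by blast
      then show ?thesis
        using c by (intro bexI[of _ "lmonom c n + q'"]) (auto simp: p'_def algebra_simps)
    qed
  qed
  moreover obtain B where "\<And>m. m < -B \<or> B < m \<Longrightarrow> p $$ m = 0"
    using laurentQ_support_bounded laurentZ_imp_laurentQ p(1) by blast
  ultimately show ?thesis using p by blast
qed

text \<open>Both ends of the support, \<open>fls_subdegree p\<close> and \<open>- fls_subdegree (lbar p)\<close>, are
  additive under multiplication, so the support of a unit is a single point.\<close>

lemma laurentQ_unit_eq_lmonom: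
  assumes p: "p \<in> laurentQ" and q: "q \<in> laurentQ" and pq: "p * q = 1"
  shows "p = lmonom (p $$ fls_subdegree p) (fls_subdegree p)"
proof -
  have bounds: "fls_subdegree f \<le> m \<and> m \<le> - fls_subdegree (lbar f)"
    if "f \<in> laurentQ" "f $$ m \<noteq> 0" for f m
  proof
    show "fls_subdegree f \<le> m" using that(2) by (rule fls_subdegree_leI)
    have "fls_subdegree (lbar f) \<le> - m" using that by (intro fls_subdegree_leI) simp
    then show "m \<le> - fls_subdegree (lbar f)" by simp
  qed
  have "p \<noteq> 0" "q \<noteq> 0" using pq by auto
  moreover have "lbar p \<noteq> 0" "lbar q \<noteq> 0" using calculation p q by (simp_all add: lbar_eq_0_iff)
  moreover have "lbar p * lbar q = 1" using pq p q by (metis lbar_mult lbar_1)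
  ultimately have "fls_subdegree p + fls_subdegree q = 0"
    and "fls_subdegree (lbar p) + fls_subdegree (lbar q) = 0"
    using pq fls_subdegree_mult[of p q] fls_subdegree_mult[of "lbar p" "lbar q"] by auto
  moreover have "fls_subdegree p \<le> - fls_subdegree (lbar p)"
    and "fls_subdegree q \<le> - fls_subdegree (lbar q)"
    using bounds[OF p nth_fls_subdegree_nonzero] bounds[OF q nth_fls_subdegree_nonzero]
      \<open>p \<noteq> 0\<close> \<open>q \<noteq> 0\<close> by auto
  ultimately have "fls_subdegree p = - fls_subdegree (lbar p)" by linarith
  then show ?thesis
    using bounds[OF p] by (intro fls_eqI) (metis lmonom_nth order_antisym)
qed

lemma laurentZ_unit_eq:
  assumes "p \<in> laurentZ" "q \<in> laurentZ" "p * q = 1"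
  obtains n where "p = lmonom 1 n \<or> p = lmonom (-1) n"
proof -
  let ?c = "\<lambda>f. f $$ fls_subdegree f" and ?n = "\<lambda>f. fls_subdegree f"
  have "p = lmonom (?c p) (?n p)" "q = lmonom (?c q) (?n q)"
    using laurentQ_unit_eq_lmonom[of p q] laurentQ_unit_eq_lmonom[of q p] assms
    by (simp_all add: laurentZ_imp_laurentQ mult.commute)
  then have "lmonom (?c p * ?c q) (?n p + ?n q) = 1"
    using assms(3) by (metis lmonom_mult_lmonom)
  then have "?c p * ?c q = 1" by (simp add: lmonom_eq_1_iff)
  moreover have "?c p \<in> \<int>" "?c q \<in> \<int>" using assms(1,2) by (simp_all add: laurentZ_iff)
  ultimately have "?c p = 1 \<or> ?c p = -1"
    by (elim Ints_cases) (metis of_int_1 of_int_eq_iff of_int_mult zmult_eq_1_iff of_int_minus)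
  then show ?thesis using \<open>p = lmonom (?c p) (?n p)\<close> by (intro that[of "?n p"]) auto
qed

lemma square_eq_lmonom:
  fixes g :: K
  assumes "g * g = lmonom e k" and "e = 1 \<or> e = -1"
  obtains m where "g = lmonom 1 m \<or> g = lmonom (-1) m"
proof -
  have "g \<noteq> 0" using assms by (auto dest: arg_cong[where f = "\<lambda>f. f $$ k"])
  define m where "m = fls_subdegree g"
  have "(g * g) $$ (m + m) = g $$ m * g $$ m"
    using fls_times_base[of g g] by (simp add: m_def)
  moreover have "g $$ m \<noteq> 0" using \<open>g \<noteq> 0\<close> by (simp add: m_def)
  ultimately have "k = m + m" and e: "e = g $$ m * g $$ m"
    using assms(1) by (auto split: if_splits)
  then have "e = 1" using assms(2) by (metis neg_0_le_iff_le not_one_le_zero zero_le_square)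
  define h where "h = g * lmonom 1 (- m)"
  have "h * h = (g * g) * (lmonom 1 (- m) * lmonom 1 (- m))" by (simp add: h_def algebra_simps)
  also have "\<dots> = 1"
    using assms(1) \<open>e = 1\<close> \<open>k = m + m\<close> by (simp add: lmonom_mult_lmonom lmonom_1_0)
  finally have "h = 1 \<or> h = -1" by (simp add: square_eq_1_iff)
  moreover have "g = h * lmonom 1 m"
    by (simp add: h_def mult.assoc lmonom_mult_lmonom lmonom_1_0)
  ultimately show ?thesis by (intro that[of m]) (auto simp: lmonom_uminus)
qed

section \<open>Evaluation at a primitive cube root of unity\<close>

definition zeta3 :: complex where
  "zeta3 = Complex (-1/2) (sqrt 3 / 2)"

lemma zeta3_sq: "zeta3 * zeta3 = -1 - zeta3"
  and zeta3_mult_cnj: "zeta3 * cnj zeta3 = 1"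
  and zeta3_add_cnj: "zeta3 + cnj zeta3 = -1"
  and cnj_zeta3: "cnj zeta3 = -1 - zeta3"
  by (simp_all add: zeta3_def complex_eq_iff)

lemma zeta3_nonzero [simp]: "zeta3 \<noteq> 0"
  using zeta3_mult_cnj by auto

lemma inverse_zeta3: "inverse zeta3 = cnj zeta3"
  using zeta3_mult_cnj by (rule inverse_unique)

lemma zeta3_cube: "zeta3 ^ 3 = 1"
proof -
  have "zeta3 ^ 3 = (-1 - zeta3) * zeta3" by (simp add: power3_eq_cube zeta3_sq)
  also have "\<dots> = - zeta3 - zeta3 * zeta3" by (simp add: algebra_simps)
  finally show ?thesis by (simp add: zeta3_sq)
qed

lemma zeta3_powi: "zeta3 powi n = zeta3 ^ nat (n mod 3)"
proof -
  have "zeta3 powi n = zeta3 powi (3 * (n div 3)) * zeta3 powi (n mod 3)"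
    by (simp flip: power_int_add)
  also have "zeta3 powi (3 * (n div 3)) = 1"
    by (simp add: power_int_mult zeta3_cube)
  finally show ?thesis by (simp add: power_int_def)
qed

lemma of_rat_complex: "(of_rat r :: complex) = complex_of_real (of_rat r)"
  by (cases r) (simp add: of_rat_rat)

lemma leval_cnj: "leval (cnj z) f = cnj (leval z f)"
  by (simp add: leval_def of_rat_complex)

lemma leval_zeta3_laurentZ:
  assumes "p \<in> laurentZ" obtains a b :: int where "leval zeta3 p = of_int a + of_int b * zeta3"
proof -
  have "\<exists>a b :: int. leval zeta3 p = of_int a + of_int b * zeta3"
    using assms
  proof (induction p rule: laurentZ_induct)
    case zero then show ?case by (intro exI[of _ 0]) simp
  next
    case (step c n g)
    obtain a b :: int where ab: "leval zeta3 g = of_int a + of_int b * zeta3"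
      using step by blast
    obtain j :: int where "c = of_int j" using step by (auto elim: Ints_cases)
    then have val: "leval zeta3 (lmonom c n + g)
        = of_int j * zeta3 ^ nat (n mod 3) + of_int a + of_int b * zeta3"
      using step by (simp add: leval_add laurentZ_imp_laurentQ leval_lmonom zeta3_powi ab)
    consider "nat (n mod 3) = 0" | "nat (n mod 3) = 1" | "nat (n mod 3) = 2" by linarith
    then show ?case
    proof cases
      case 1 then show ?thesis using val by (intro exI[of _ "a + j"] exI[of _ b]) (simp add: algebra_simps)
    next
      case 2 then show ?thesis using val by (intro exI[of _ a] exI[of _ "b + j"]) (simp add: algebra_simps)
    next
      case 3 then show ?thesis using val
        by (intro exI[of _ "a - j"] exI[of _ "b - j"]) (simp add: power2_eq_square zeta3_sq algebra_simps)
    qed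
  qed
  then show ?thesis using that by blast
qed

lemma eisenstein_norm:
  "(of_int a + of_int b * zeta3) * (of_int a + of_int b * cnj zeta3) = of_int (a * a - a * b + b * b)"
proof -
  have "(of_int a + of_int b * zeta3) * (of_int a + of_int b * cnj zeta3)
        = of_int a * of_int a + of_int a * of_int b * (zeta3 + cnj zeta3)
          + of_int b * of_int b * (zeta3 * cnj zeta3)"
    by (simp add: algebra_simps)
  then show ?thesis by (simp only: zeta3_mult_cnj zeta3_add_cnj) simp
qed

lemma eisenstein_unit:
  fixes a b :: int
  assumes "a * a - a * b + b * b = 1"
  obtains s :: rat and j :: nat where "s = 1 \<or> s = -1" "of_int a + of_int b * zeta3 = of_rat s * zeta3 ^ j"
proof -
  have "(2*a - b)\<^sup>2 + 3 * b\<^sup>2 = 4" "(2*b - a)\<^sup>2 + 3 * a\<^sup>2 = 4"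
    using assms by algebra+
  then have "b\<^sup>2 \<le> 1" "a\<^sup>2 \<le> 1"
    by (smt (verit) zero_le_power2)+
  then have "\<bar>a\<bar> \<le> 1" "\<bar>b\<bar> \<le> 1"
    by (simp_all add: abs_square_le_1)
  then have "a \<in> {-1, 0, 1}" "b \<in> {-1, 0, 1}"
    by (auto simp: abs_le_iff)
  then consider "a = 1" "b = 0" | "a = -1" "b = 0" | "a = 0" "b = 1" | "a = 0" "b = -1"
    | "a = 1" "b = 1" | "a = -1" "b = -1"
    using assms by auto
  then show ?thesis
  proof cases
    case 1 then show ?thesis using that[of 1 0] by simp
  next
    case 2 then show ?thesis using that[of "-1" 0] by simp
  next
    case 3 then show ?thesis using that[of 1 1] by simp
  next
    case 4 then show ?thesis using that[of "-1" 1] by simp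
  next
    case 5 then show ?thesis using that[of "-1" 2] by (simp add: power2_eq_square zeta3_sq)
  next
    case 6 then show ?thesis using that[of 1 2] by (simp add: power2_eq_square zeta3_sq)
  qed
qed

lemma leval_zeta3_cyclo: "leval zeta3 (1 + fls_X + fls_X ^ 2) = 0"
  by (simp add: leval_add leval_mult power2_eq_square zeta3_sq)

lemma leval_zeta3_Phi: "leval zeta3 Phi = 0"
  by (simp add: Phi_def leval_add inverse_zeta3 cnj_zeta3)

lemma cyclo3_dvd_if_leval_zeta3:
  assumes "p \<in> laurentZ" "leval zeta3 p = 0"
  shows "\<exists>q\<in>laurentZ. p = (1 + fls_X + fls_X ^ 2) * q"
proof (rule laurentZ_dvd_if_leval_eq_0[where k = 2 and z = zeta3])
  fix p :: K and n :: int
  assume p: "\<forall>m. m < n \<or> n + 2 \<le> m \<longrightarrow> p $$ m = 0" and "leval zeta3 p = 0"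
  have supp: "{m. p $$ m \<noteq> 0} \<subseteq> {n, n + 1}"
  proof
    fix m assume "m \<in> {m. p $$ m \<noteq> 0}"
    then have "\<not> (m < n \<or> n + 2 \<le> m)" using p by auto
    then show "m \<in> {n, n + 1}" by auto
  qed
  have "leval zeta3 p = (\<Sum>m\<in>{n, n + 1}. of_rat (p $$ m) * zeta3 powi m)"
    using supp by (rule leval_eq_sum[rotated]) simp
  also have "\<dots> = zeta3 powi n * (of_rat (p $$ n) + of_rat (p $$ (n + 1)) * zeta3)"
    by (simp add: power_int_add algebra_simps)
  finally have "of_rat (p $$ n) + of_rat (p $$ (n + 1)) * zeta3 = 0"
    using \<open>leval zeta3 p = 0\<close> by simp
  then have "p $$ n = 0 \<and> p $$ (n + 1) = 0"
    by (auto simp: zeta3_def complex_eq_iff of_rat_complex)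
  then show "p = 0"
    using supp by (intro fls_zero_eqI) blast
qed (use assms leval_zeta3_cyclo in \<open>auto simp: leval_add\<close>)

lemma one_plus_X_dvd_if_leval_minus_one:
  assumes "p \<in> laurentZ" "leval (-1 :: rat) p = 0"
  shows "\<exists>q\<in>laurentZ. p = (1 + fls_X) * q"
proof (rule laurentZ_dvd_if_leval_eq_0[where k = 1 and z = "-1 :: rat"])
  fix p :: K and n :: int
  assume p: "\<forall>m. m < n \<or> n + 1 \<le> m \<longrightarrow> p $$ m = 0" and "leval (-1 :: rat) p = 0"
  have supp: "{m. p $$ m \<noteq> 0} \<subseteq> {n}"
  proof
    fix m assume "m \<in> {m. p $$ m \<noteq> 0}"
    then have "\<not> (m < n \<or> n + 1 \<le> m)" using p by auto
    then show "m \<in> {n}" by auto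
  qed
  have "leval (-1 :: rat) p = p $$ n * (-1) powi n"
    using supp by (subst leval_eq_sum[of "{n}"]) auto
  then have "p $$ n = 0" using \<open>leval (-1 :: rat) p = 0\<close> by simp
  then show "p = 0"
    using supp by (intro fls_zero_eqI) blast
qed (use assms in \<open>auto simp: leval_add\<close>)

section \<open>Matrix identities over a field\<close>

text \<open>The lift \<open>A\<close> of \<open>u\<cdot>quat x y\<close>: it is \<open>T D T\<^sup>-\<^sup>1\<close> for \<open>T = conj_matrix t\<close> and
  \<open>D = block_diag (u x) (u y) (-u \<Phi> y\<^sup>-) (u x\<^sup>-)\<close> (\<open>lift_matrix_conj\<close>), written through the
  quotients \<open>e = (1 - u x)/(1 + t + t\<^sup>2)\<close>, \<open>q\<^sub>1 = (x + t x\<^sup>-)/(1 + t)\<close>, \<open>q\<^sub>2 = (y\<^sup>- - y)/(1 + t)\<close>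
  so that its entries are integral; the last column is forced by \<open>A 1 = 1\<close>.\<close>

definition lift_matrix :: "'a::field \<Rightarrow> 'a \<Rightarrow> 'a \<Rightarrow> 'a \<Rightarrow> 'a \<Rightarrow> 'a \<Rightarrow> 'a \<Rightarrow> 'a \<Rightarrow> 'a \<Rightarrow> 'a \<Rightarrow> 'a^3^3" where
 "lift_matrix t ti u x xb y yb e q1 q2 = vector [
   vector [u*x + e, t*(u*y + e), 1 - (u*x + e) - t*(u*y+e)],
   vector [e - u*yb, t*e + u*q1 + u*q2, 1 - (e - u*yb) - (t*e + u*q1 + u*q2)],
   vector [e + ti*u*yb, ti*(1 - u*y - e - (t*e + u*q1 + u*q2)),
           1 - (e + ti*u*yb) - ti*(1 - u*y - e - (t*e + u*q1 + u*q2))]]"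

definition conj_matrix :: "'a::field \<Rightarrow> 'a^3^3" where
  "conj_matrix t = vector [vector [1, t + t^2, 0], vector [1, -1, t], vector [1, -1, -1]]"

definition block_diag :: "'a::field \<Rightarrow> 'a \<Rightarrow> 'a \<Rightarrow> 'a \<Rightarrow> 'a^3^3" where
  "block_diag a b c d = vector [vector [1,0,0], vector [0,a,b], vector [0,c,d]]"

definition gram_matrix :: "'a::field \<Rightarrow> 'a^3^3" where
  "gram_matrix t = vector [vector [-t/(1+t+t^2), 0, 0], vector [0, t/(1+t+t^2), 0], vector [0,0,1]]"

definition herm_matrix :: "'a::field \<Rightarrow> 'a \<Rightarrow> 'a^3^3" where
  "herm_matrix t ti = vector [vector [1, - ti, - ti], vector [- t, 1, - ti], vector [- t, - t, 1]]"

lemmas matrix3_simps = vec_eq_iff forall_3 matrix_matrix_mult_def sum_3 transpose_def vector_3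

lemma lift_matrix_conj:
  fixes t ti u x xb y yb e q1 q2 :: "'a::field"
  assumes "t*ti = 1" "(1+t+t^2)*e = 1 - u*x" "(1+t)*q1 = x + t*xb" "(1+t)*q2 = yb - y"
  shows "lift_matrix t ti u x xb y yb e q1 q2 ** conj_matrix t =
    conj_matrix t ** block_diag (u*x) (u*y) (-u*(1+ti+t)*yb) (u*xb)"
  unfolding lift_matrix_def conj_matrix_def block_diag_def matrix3_simps
  using assms by (simp add: algebra_simps power2_eq_square; algebra)

lemma conj_matrix_gram:
  fixes t ti :: "'a::field"
  assumes "t*ti = 1" and "1+t+t^2 \<noteq> 0"
  shows "conj_matrix ti ** gram_matrix t ** transpose (conj_matrix t) = herm_matrix t ti"
  unfolding gram_matrix_def herm_matrix_def conj_matrix_def matrix3_simps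
  using assms by (simp add: field_simps power2_eq_square; algebra)

lemma block_diag_gram:
  fixes t ti u ub x xb y yb :: "'a::field"
  assumes "t*ti = 1" "u*ub = 1" "1+t+t^2 \<noteq> 0" "x*xb + (1+ti+t)*y*yb = 1"
  shows "block_diag (ub*xb) (ub*yb) (-ub*(1+t+ti)*y) (ub*x) ** gram_matrix t **
      transpose (block_diag (u*x) (u*y) (-u*(1+ti+t)*yb) (u*xb)) = gram_matrix t"
proof -
  define S where "S = 1+t+t^2"
  have "S \<noteq> 0" using assms(3) by (simp add: S_def)
  have rel: "t*(x*xb) + S*(y*yb) = t" using assms(1,4) unfolding S_def by algebra
  have G: "gram_matrix t = vector [vector [-t/S, 0, 0], vector [0, t/S, 0], vector [0,0,1]]"
    by (simp add: gram_matrix_def S_def)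
  show ?thesis
    unfolding G block_diag_def matrix3_simps
    using \<open>S \<noteq> 0\<close> by (simp add: field_simps) (use rel assms(1,2) S_def in algebra)
qed

lemma vrow_lift_matrix:
  fixes t ti u x xb y yb e q1 q2 :: "'a::field"
  assumes "t*ti = 1" "(1+t+t^2)*e = 1 - u*x" "(1+t)*q1 = x + t*xb" "(1+t)*q2 = yb - y"
  shows "vector [t, t^2, t^3] v* lift_matrix t ti u x xb y yb e q1 q2 = vector [t, t^2, t^3]"
  unfolding lift_matrix_def vec_eq_iff forall_3 vector_matrix_mult_def sum_3 vector_3
  using assms by (simp add: algebra_simps power2_eq_square power3_eq_cube; algebra)

lemma lift_matrix_one: "lift_matrix t ti u x xb y yb e q1 q2 *v vector [1,1,1] = vector [1,1,1]"
  unfolding lift_matrix_def vec_eq_iff forall_3 matrix_vector_mult_def sum_3 vector_3 by simp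

lemma lift_matrix_phi_numerators:
  fixes t ti u x xb y yb e q1 q2 :: "'a::field"
  assumes "t*ti = 1" "(1+t+t^2)*e = 1 - u*x" "(1+t)*q1 = x + t*xb" "(1+t)*q2 = yb - y"
  defines "A \<equiv> lift_matrix t ti u x xb y yb e q1 q2"
  shows "A$1$1 * (1 + t + t^2) - 1 = t * (1 + t) * (u*x)"
    "A$1$1 + A$1$2 * (1 + t) - 1 = t * (1 + t) * (u*y)"
    "ti * (A$1$1 * (1 + t + t^2) - 1) + (1 + t) * (A$2$1 * (1 + t + t^2) - 1)
      = t * (1 + t) * (-u*(1+ti+t)*yb)"
    "ti * (A$1$1 + A$1$2 * (1 + t) - 1) + (1 + t) * (A$2$1 + A$2$2 * (1 + t) - 1)
      = t * (1 + t) * (u*xb)"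
  unfolding A_def lift_matrix_def vector_3
  using assms(1-4) by (simp_all add: algebra_simps power2_eq_square; algebra)+

lemma isometry_of_conj:
  fixes Ab A T T' D1 D2 G J :: "'a::comm_ring_1^'n^'n"
  assumes "Ab ** T' = T' ** D1" "A ** T = T ** D2" "D1 ** G ** transpose D2 = G"
    and "T' ** G ** transpose T = J"
  shows "Ab ** J ** transpose A = J"
proof -
  have "Ab ** J ** transpose A = (Ab ** T') ** G ** transpose (A ** T)"
    by (simp add: assms(4)[symmetric] matrix_mul_assoc matrix_transpose_mul)
  also have "\<dots> = T' ** (D1 ** G ** transpose D2) ** transpose T"
    by (simp add: assms(1,2) matrix_mul_assoc matrix_transpose_mul)
  finally show ?thesis using assms(3,4) by simp
qed

lemma det_eq_if_conj:
  fixes A T D :: "'a::field^'n^'n"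
  assumes "A ** T = T ** D" "det T \<noteq> 0"
  shows "det A = det D"
  using arg_cong[OF assms(1), of det] assms(2) by (simp add: det_mul)

lemma det_conj_matrix: "det (conj_matrix t) = (1 + t) * (1 + t + t^2)"
  by (simp add: conj_matrix_def det_3 algebra_simps power2_eq_square)

lemma det_block_diag: "det (block_diag a b c d) = a * d - b * c"
  by (simp add: block_diag_def det_3)

lemma det_lift_matrix:
  fixes t ti u x xb y yb e q1 q2 :: "'a::field"
  assumes "t*ti = 1" "(1+t+t^2)*e = 1 - u*x" "(1+t)*q1 = x + t*xb" "(1+t)*q2 = yb - y"
    and "1 + t \<noteq> 0" "1+t+t^2 \<noteq> 0"
  shows "det (lift_matrix t ti u x xb y yb e q1 q2) = u * u * (x*xb + (1+ti+t)*y*yb)"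
proof -
  have "det (lift_matrix t ti u x xb y yb e q1 q2) = det (block_diag (u*x) (u*y) (-u*(1+ti+t)*yb) (u*xb))"
    using assms by (intro det_eq_if_conj[OF lift_matrix_conj]) (simp_all add: det_conj_matrix)
  then show ?thesis by (simp add: det_block_diag algebra_simps)
qed

definition adj3 :: "'a::comm_ring_1^3^3 \<Rightarrow> 'a^3^3" where
  "adj3 A = vector [
    vector [A$2$2*A$3$3 - A$2$3*A$3$2, A$1$3*A$3$2 - A$1$2*A$3$3, A$1$2*A$2$3 - A$1$3*A$2$2],
    vector [A$2$3*A$3$1 - A$2$1*A$3$3, A$1$1*A$3$3 - A$1$3*A$3$1, A$1$3*A$2$1 - A$1$1*A$2$3],
    vector [A$2$1*A$3$2 - A$2$2*A$3$1, A$1$2*A$3$1 - A$1$1*A$3$2, A$1$1*A$2$2 - A$1$2*A$2$1]]"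

lemma adj3_inverse:
  fixes A :: "'a::comm_ring_1^3^3"
  assumes "c * det A = 1"
  shows "A ** (\<chi> i j. c * adj3 A $ i $ j) = mat 1" "(\<chi> i j. c * adj3 A $ i $ j) ** A = mat 1"
proof -
  have one: "(mat 1 :: 'a^3^3) $ i $ j = (if i = j then c * det A else 0)" for i j
    using assms by (simp add: mat_def)
  show "A ** (\<chi> i j. c * adj3 A $ i $ j) = mat 1" "(\<chi> i j. c * adj3 A $ i $ j) ** A = mat 1"
    unfolding one vec_eq_iff forall_3 matrix_matrix_mult_def sum_3 adj3_def det_3
    by (simp_all add: algebra_simps)
qed

section \<open>Normal form of the elements of \<open>U\<^sup>1\<close>\<close>

lemma laurentQ_Phi [simp]: "Phi \<in> laurentQ"
  and laurentZ_Phi [simp]: "Phi \<in> laurentZ"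
  and lbar_Phi [simp]: "lbar Phi = Phi"
  by (simp_all add: Phi_def laurentZ_imp_laurentQ lbar_add)

definition quat :: "K \<Rightarrow> K \<Rightarrow> K^2^2" where
  "quat x y = vector [vector [x, y], vector [- Phi * lbar y, lbar x]]"

lemma det_quat: "det (quat x y) = x * lbar x + Phi * y * lbar y"
  by (simp add: quat_def det_2)

lemma pclass_self: "M \<in> pclass M"
  unfolding pclass_def by (intro CollectI exI[of _ 1]) (simp add: vec_eq_iff)

lemma pclass_scale:
  assumes "c \<noteq> 0" shows "pclass (\<chi> i j. c * M $ i $ j) = pclass M"
proof -
  have "(\<exists>d. d \<noteq> 0 \<and> N = (\<chi> i j. d * (c * M $ i $ j))) \<longleftrightarrow> (\<exists>d. d \<noteq> 0 \<and> N = (\<chi> i j. d * M $ i $ j))"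
    for N :: "K^2^2"
  proof
    assume "\<exists>d. d \<noteq> 0 \<and> N = (\<chi> i j. d * (c * M $ i $ j))"
    then obtain d where "d \<noteq> 0" "N = (\<chi> i j. d * (c * M $ i $ j))" by blast
    then show "\<exists>d. d \<noteq> 0 \<and> N = (\<chi> i j. d * M $ i $ j)"
      using assms by (intro exI[of _ "d * c"]) (simp add: mult.assoc)
  next
    assume "\<exists>d. d \<noteq> 0 \<and> N = (\<chi> i j. d * M $ i $ j)"
    then obtain d where "d \<noteq> 0" "N = (\<chi> i j. d * M $ i $ j)" by blast
    then show "\<exists>d. d \<noteq> 0 \<and> N = (\<chi> i j. d * (c * M $ i $ j))"
      using assms by (intro exI[of _ "d / c"]) simp
  qed
  then show ?thesis by (simp add: pclass_def)
qed

lemma GLm_laurentZ_det_unit: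
  fixes M :: "K^2^2"
  assumes "M \<in> GLm laurentZ"
  obtains n where "det M = lmonom 1 n \<or> det M = lmonom (-1) n"
proof -
  obtain N where N: "\<forall>i j. N $ i $ j \<in> laurentZ" "M ** N = mat 1" and M: "\<forall>i j. M $ i $ j \<in> laurentZ"
    using assms unfolding GLm_def by auto
  have "det M * det N = 1" using det_mul[of M N] N(2) by simp
  moreover have "det M \<in> laurentZ" "det N \<in> laurentZ" using M N(1) by (simp_all add: det_2)
  ultimately show ?thesis using that laurentZ_unit_eq by blast
qed

text \<open>The scalar relating \<open>B\<close> to the integral \<open>M\<close> has square \<open>\<plusminus>t\<^sup>n\<close>, hence is itself \<open>\<plusminus>t\<^sup>m\<close>.\<close>

lemma det_one_rep_laurentZ:
  fixes M B :: "K^2^2"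
  assumes "M \<in> GLm laurentZ" "B \<in> pclass M" "det B = 1"
  shows "B $ i $ j \<in> laurentZ"
proof -
  obtain c where c: "B = (\<chi> i j. c * M $ i $ j)" using assms(2) by (auto simp: pclass_def)
  obtain n e where e: "e = 1 \<or> e = -1" "det M = lmonom e n"
    using GLm_laurentZ_det_unit[OF assms(1)] by blast
  have det: "c * c * det M = 1" using assms(3) c by (simp add: det_2 algebra_simps)
  have "det M * lmonom e (- n) = 1"
    using e by (auto simp: lmonom_mult_lmonom lmonom_1_0)
  then have "c * c = c * c * det M * lmonom e (- n)" by (simp add: mult.assoc)
  then have "c * c = lmonom e (- n)" by (simp add: det)
  then obtain m where "c = lmonom 1 m \<or> c = lmonom (-1) m" using e(1) by (rule square_eq_lmonom)
  moreover have "M $ i $ j \<in> laurentZ" using assms(1) by (simp add: GLm_def)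
  ultimately show ?thesis using c by (auto intro: laurentZ_lmonom_mult)
qed

text \<open>The scalar \<open>b\<close> is only a rational function, so bar cannot be applied to it;
  instead the entries are compared through their squares, using \<open>b\<^sup>2 N = 1\<close> for the
  bar-invariant norm \<open>N\<close>.\<close>

lemma scaled_quat_entries:
  fixes b g1 g2 m11 m12 m21 m22 :: K
  assumes Q: "m11 \<in> laurentQ" "m12 \<in> laurentQ" "g1 \<in> laurentQ" "g2 \<in> laurentQ"
    and m: "m11 = b * g1" "m12 = b * g2" "m21 = b * (- Phi * lbar g2)" "m22 = b * lbar g1"
    and norm: "b * b * (g1 * lbar g1 + Phi * g2 * lbar g2) = 1"
  obtains s where "s = 1 \<or> s = -1" "m22 = s * lbar m11" "m21 = - s * Phi * lbar m12"
proof -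
  define N where "N = g1 * lbar g1 + Phi * g2 * lbar g2"
  have "b * b * N = 1" using norm by (simp add: N_def)
  then have N: "N \<noteq> 0" "lbar N = N" "b * b * N = 1"
    using Q by (auto simp: N_def lbar_add lbar_mult)
  have sq: "(b * g) * (b * g) * N = g * g" for g
    using N(3) by (simp add: algebra_simps)
  have sq_bar: "lbar m * lbar m * N = lbar g * lbar g"
    if "m = b * g" "m \<in> laurentQ" "g \<in> laurentQ" for m g
    using arg_cong[OF sq[of g], of lbar] that Q N(2) by (simp add: N_def lbar_mult)
  have "m22 * m22 * N = lbar m11 * lbar m11 * N"
    using sq[of "lbar g1"] sq_bar[of m11 g1] m Q by simp
  then have s1: "m22 = lbar m11 \<or> m22 = - lbar m11"
    using N(1) by (simp add: square_eq_iff)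
  have "m21 * m21 * N = (Phi * lbar m12) * (Phi * lbar m12) * N"
    using sq[of "- Phi * lbar g2"] sq_bar[of m12 g2] m Q by (simp add: algebra_simps)
  then have s2: "m21 = Phi * lbar m12 \<or> m21 = - (Phi * lbar m12)"
    using N(1) by (simp add: square_eq_iff)
  show ?thesis
  proof (cases "g1 = 0")
    case True
    then have "m11 = 0" "m22 = 0" using m by simp_all
    then show ?thesis using s2 that[of 1] that[of "-1"] by auto
  next
    case False
    then have "lbar g1 \<noteq> 0" using Q lbar_eq_0_iff by blast
    obtain s :: K where s: "s = 1 \<or> s = -1" "m22 = s * lbar m11"
      using s1 by (metis mult_1 mult_minus1)
    have "m11 * g2 = m12 * g1" using m by (simp add: algebra_simps)
    then have "lbar m11 * lbar g2 = lbar m12 * lbar g1" using Q by (metis lbar_mult)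
    moreover have "m21 * lbar g1 = - Phi * lbar g2 * m22" using m by (simp add: algebra_simps)
    ultimately have "m21 * lbar g1 = (- s * Phi * lbar m12) * lbar g1"
      using s(2) by (simp add: algebra_simps)
    then have "m21 = - s * Phi * lbar m12" using \<open>lbar g1 \<noteq> 0\<close> by (metis mult_right_cancel)
    with s show ?thesis by (intro that)
  qed
qed

text \<open>Evaluation at \<open>t = 1\<close> turns the norm into \<open>x(1)\<^sup>2 + 3 y(1)\<^sup>2 \<ge> 0\<close>.\<close>

lemma quat_norm_neq_minus_one:
  assumes "x \<in> laurentQ" "y \<in> laurentQ"
  shows "x * lbar x + Phi * y * lbar y \<noteq> -1"
proof
  assume "x * lbar x + Phi * y * lbar y = -1"
  then have "leval (1 :: rat) (x * lbar x + Phi * y * lbar y) = -1" by (simp add: leval_uminus)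
  moreover have "leval (1 :: rat) Phi = 3" by (simp add: Phi_def leval_add)
  ultimately have "leval 1 x * leval 1 x + 3 * (leval 1 y * leval (1 :: rat) y) = -1"
    using assms by (simp add: leval_add leval_mult leval_lbar)
  moreover have "0 \<le> leval 1 x * leval 1 x + 3 * (leval 1 y * leval (1 :: rat) y)" by simp
  ultimately show False by linarith
qed

lemma scaled_quat_det_one:
  fixes b g1 g2 :: K
  defines "B \<equiv> \<chi> i j. b * quat g1 g2 $ i $ j"
  assumes "g1 \<in> laurentQ" "g2 \<in> laurentQ" "\<forall>i j. B $ i $ j \<in> laurentQ" "det B = 1"
  shows "B = quat (B $ 1 $ 1) (B $ 1 $ 2)"
proof -
  have m: "B $ 1 $ 1 = b * g1" "B $ 1 $ 2 = b * g2" "B $ 2 $ 1 = b * (- Phi * lbar g2)"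
    "B $ 2 $ 2 = b * lbar g1"
    by (simp_all add: B_def quat_def)
  have "b * b * (g1 * lbar g1 + Phi * g2 * lbar g2) = 1"
    using assms(5) unfolding det_2 m by (simp add: algebra_simps)
  moreover have "B $ 1 $ 1 \<in> laurentQ" "B $ 1 $ 2 \<in> laurentQ" using assms(4) by simp_all
  ultimately obtain s where s: "s = 1 \<or> s = -1" "B $ 2 $ 2 = s * lbar (B $ 1 $ 1)"
    "B $ 2 $ 1 = - s * Phi * lbar (B $ 1 $ 2)"
    using scaled_quat_entries[of "B $ 1 $ 1" "B $ 1 $ 2" g1 g2 b] assms(2,3) m by blast
  then have "s * (B $ 1 $ 1 * lbar (B $ 1 $ 1) + Phi * B $ 1 $ 2 * lbar (B $ 1 $ 2)) = 1"
    using assms(5) unfolding det_2 by (simp add: algebra_simps)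
  moreover have "B $ 1 $ 1 * lbar (B $ 1 $ 1) + Phi * B $ 1 $ 2 * lbar (B $ 1 $ 2) \<noteq> -1"
    using assms(4) by (simp add: quat_norm_neq_minus_one)
  ultimately have "s = 1" using s(1) by (metis mult_minus1 minus_equation_iff)
  then show ?thesis using s by (simp add: quat_def vec_eq_iff forall_2)
qed

lemma U1_normal_form:
  assumes "X \<in> U1"
  obtains x y where "x \<in> laurentZ" "y \<in> laurentZ" "x * lbar x + Phi * y * lbar y = 1"
    "X = pclass (quat x y)"
proof -
  obtain B where X: "X \<in> UZ" "X = pclass B" "det B = 1"
    using assms unfolding U1_def by auto
  obtain g1 g2 where g: "g1 \<in> laurentQ" "g2 \<in> laurentQ" "X = pclass (quat g1 g2)"
    using X(1) unfolding UZ_def quatQ_def quat_def by auto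
  obtain M where "M \<in> GLm laurentZ" "X = pclass M"
    using X(1) unfolding UZ_def PGL2_def by auto
  moreover have "B \<in> pclass M" using pclass_self[of B] X(2) \<open>X = pclass M\<close> by simp
  ultimately have BZ: "\<forall>i j. B $ i $ j \<in> laurentZ"
    using X(3) det_one_rep_laurentZ by blast
  obtain b where "B = (\<chi> i j. b * quat g1 g2 $ i $ j)"
    using pclass_self[of B] X(2) g(3) by (auto simp: pclass_def)
  then have B: "B = quat (B $ 1 $ 1) (B $ 1 $ 2)"
    using scaled_quat_det_one g(1,2) BZ X(3) laurentZ_imp_laurentQ by blast
  show ?thesis
  proof
    show "B $ 1 $ 1 \<in> laurentZ" "B $ 1 $ 2 \<in> laurentZ" using BZ by simp_all
    show "B $ 1 $ 1 * lbar (B $ 1 $ 1) + Phi * B $ 1 $ 2 * lbar (B $ 1 $ 2) = 1"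
      using X(3) B by (metis det_quat)
    show "X = pclass (quat (B $ 1 $ 1) (B $ 1 $ 2))" using X(2) B by simp
  qed
qed

section \<open>Lifting to \<open>\<B>\<close>\<close>

lemma fls_X_mult_X_inv: "fls_X * fls_X_inv = (1 :: K)"
  and fls_X_inv_mult_X: "fls_X_inv * fls_X = (1 :: K)"
  by (simp_all add: fls_X_inv_times_conv_shift)

lemma cyclo_nonzero: "(1 + fls_X + fls_X ^ 2 :: K) \<noteq> 0"
  and one_plus_X_nonzero: "(1 + fls_X :: K) \<noteq> 0"
  by (auto dest!: arg_cong[where f = "\<lambda>f. f $$ 0"])

lemma phi_eq_if_numerators:
  fixes A :: "K^3^3"
  defines "f11 \<equiv> A$1$1 * (1 + fls_X + fls_X^2) - 1" and "f12 \<equiv> A$1$1 + A$1$2 * (1 + fls_X) - 1"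
    and "f21 \<equiv> A$2$1 * (1 + fls_X + fls_X^2) - 1" and "f22 \<equiv> A$2$1 + A$2$2 * (1 + fls_X) - 1"
  assumes "f11 = fls_X * (1 + fls_X) * a" "f12 = fls_X * (1 + fls_X) * b"
    "fls_X_inv * f11 + (1 + fls_X) * f21 = fls_X * (1 + fls_X) * c"
    "fls_X_inv * f12 + (1 + fls_X) * f22 = fls_X * (1 + fls_X) * d"
  shows "phi A = vector [vector [a, b], vector [c, d]]"
proof -
  let ?D = "fls_X * (1 + fls_X) :: K"
  have D: "?D \<noteq> 0" using one_plus_X_nonzero by simp
  have "f11 / ?D = a" "f12 / ?D = b" using assms(5,6) D by simp_all
  moreover have "fls_X_inv * a + (1 + fls_X) * (f21 / ?D) = c"
    "fls_X_inv * b + (1 + fls_X) * (f22 / ?D) = d"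
    using assms(5-8) D by (simp_all add: field_simps)
  ultimately show ?thesis
    unfolding phi_def Let_def f11_def[symmetric] f12_def[symmetric] f21_def[symmetric] f22_def[symmetric]
    by simp
qed

lemma GLm_laurentZ_if_det_unit:
  fixes A :: "K^3^3"
  assumes "\<forall>i j. A $ i $ j \<in> laurentZ" "c \<in> laurentZ" "c * det A = 1"
  shows "A \<in> GLm laurentZ"
  unfolding GLm_def
proof (intro CollectI conjI exI)
  show "\<forall>i j. (\<chi> i j. c * adj3 A $ i $ j) $ i $ j \<in> laurentZ"
    using assms(1,2) by (simp add: adj3_def forall_3)
qed (use assms adj3_inverse in auto)

lemma lift_matrix_isometry:
  fixes u ub x y e q1 q2 :: K
  assumes "u * ub = 1" "lbar u = ub"
    and "u \<in> laurentQ" "x \<in> laurentQ" "y \<in> laurentQ" "e \<in> laurentQ" "q1 \<in> laurentQ" "q2 \<in> laurentQ"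
    and div: "(1 + fls_X + fls_X ^ 2) * e = 1 - u * x" "(1 + fls_X) * q1 = x + fls_X * lbar x"
      "(1 + fls_X) * q2 = lbar y - y"
    and norm: "x * lbar x + (1 + fls_X_inv + fls_X) * y * lbar y = 1"
  defines "A \<equiv> lift_matrix fls_X fls_X_inv u x (lbar x) y (lbar y) e q1 q2"
  shows "matbar A ** J3 ** transpose A = J3"
proof -
  have div_bar: "(1 + fls_X_inv + fls_X_inv ^ 2) * lbar e = 1 - ub * lbar x"
    "(1 + fls_X_inv) * lbar q1 = lbar x + fls_X_inv * x"
    "(1 + fls_X_inv) * lbar q2 = y - lbar y"
    using div[THEN arg_cong[where f = lbar]] assms(1-8)
    by (simp_all add: lbar_mult lbar_add lbar_diff lbar_power)
  have mb: "matbar A = lift_matrix fls_X_inv fls_X ub (lbar x) x (lbar y) y (lbar e) (lbar q1) (lbar q2)"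
    using assms(2-8)
    by (simp add: A_def lift_matrix_def matbar_def vec_eq_iff forall_3 lbar_mult lbar_add lbar_diff)
  show ?thesis
  proof (rule isometry_of_conj)
    show "matbar A ** conj_matrix fls_X_inv = conj_matrix fls_X_inv **
        block_diag (ub * lbar x) (ub * lbar y) (- ub * (1 + fls_X + fls_X_inv) * y) (ub * x)"
      unfolding mb using fls_X_inv_mult_X div_bar by (rule lift_matrix_conj)
    show "A ** conj_matrix fls_X = conj_matrix fls_X **
        block_diag (u * x) (u * y) (- u * (1 + fls_X_inv + fls_X) * lbar y) (u * lbar x)"
      unfolding A_def using fls_X_mult_X_inv div by (rule lift_matrix_conj)
    show "block_diag (ub * lbar x) (ub * lbar y) (- ub * (1 + fls_X + fls_X_inv) * y) (ub * x) **
        gram_matrix fls_X ** transpose (block_diag (u * x) (u * y)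
        (- u * (1 + fls_X_inv + fls_X) * lbar y) (u * lbar x)) = gram_matrix fls_X"
      using fls_X_mult_X_inv assms(1) cyclo_nonzero norm by (rule block_diag_gram)
    have "J3 = herm_matrix fls_X fls_X_inv" by (simp add: J3_def herm_matrix_def)
    then show "conj_matrix fls_X_inv ** gram_matrix fls_X ** transpose (conj_matrix fls_X) = J3"
      using fls_X_mult_X_inv cyclo_nonzero by (simp add: conj_matrix_gram)
  qed
qed

lemma lift_matrix_in_calB:
  fixes u ub x y e q1 q2 :: K
  assumes unit: "u * ub = 1" "lbar u = ub"
    and laurentZ: "u \<in> laurentZ" "ub \<in> laurentZ" "x \<in> laurentZ" "y \<in> laurentZ"
      "e \<in> laurentZ" "q1 \<in> laurentZ" "q2 \<in> laurentZ"
    and div: "(1 + fls_X + fls_X ^ 2) * e = 1 - u * x" "(1 + fls_X) * q1 = x + fls_X * lbar x"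
      "(1 + fls_X) * q2 = lbar y - y"
    and norm: "x * lbar x + Phi * y * lbar y = 1"
  shows "lift_matrix fls_X fls_X_inv u x (lbar x) y (lbar y) e q1 q2 \<in> calB"
proof -
  define A where "A = lift_matrix fls_X fls_X_inv u x (lbar x) y (lbar y) e q1 q2"
  have norm': "x * lbar x + (1 + fls_X_inv + fls_X) * y * lbar y = 1"
    using norm by (simp add: Phi_def)
  have "det A = u * u"
    using det_lift_matrix[OF fls_X_mult_X_inv div one_plus_X_nonzero cyclo_nonzero] norm'
    by (simp add: A_def)
  then have "ub * ub * det A = 1"
    using unit(1) by (metis mult.commute mult.left_commute mult_1)
  moreover have "\<forall>i j. A $ i $ j \<in> laurentZ"
    using laurentZ by (simp add: A_def lift_matrix_def forall_3)
  ultimately have "A \<in> GLm laurentZ"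
    using laurentZ(2) by (intro GLm_laurentZ_if_det_unit) simp_all
  moreover have "matbar A ** J3 ** transpose A = J3"
    unfolding A_def using unit laurentZ[THEN laurentZ_imp_laurentQ] div norm'
    by (intro lift_matrix_isometry) simp_all
  moreover have "vrow v* A = vrow"
    unfolding vrow_def A_def using fls_X_mult_X_inv div by (rule vrow_lift_matrix)
  moreover have "A *v one3 = one3"
    unfolding one3_def A_def by (rule lift_matrix_one)
  ultimately show ?thesis by (simp add: calB_def A_def)
qed

lemma phibar_lift_matrix:
  fixes u x y e q1 q2 :: K
  assumes "u \<noteq> 0"
    and div: "(1 + fls_X + fls_X ^ 2) * e = 1 - u * x" "(1 + fls_X) * q1 = x + fls_X * lbar x"
      "(1 + fls_X) * q2 = lbar y - y"
  shows "phibar (lift_matrix fls_X fls_X_inv u x (lbar x) y (lbar y) e q1 q2) = pclass (quat x y)"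
proof -
  have "phi (lift_matrix fls_X fls_X_inv u x (lbar x) y (lbar y) e q1 q2)
      = vector [vector [u * x, u * y], vector [- u * (1 + fls_X_inv + fls_X) * lbar y, u * lbar x]]"
    by (rule phi_eq_if_numerators[OF lift_matrix_phi_numerators[OF fls_X_mult_X_inv div]])
  also have "\<dots> = (\<chi> i j. u * quat x y $ i $ j)"
    by (simp add: quat_def Phi_def vec_eq_iff forall_2 algebra_simps)
  finally show ?thesis using assms(1) by (simp add: phibar_def pclass_scale)
qed

text \<open>Since \<open>\<Phi>(\<zeta>) = 0\<close>, evaluating the norm equation at \<open>\<zeta>\<close> shows that \<open>x(\<zeta>)\<close> is a unit
  of \<open>\<int>[\<zeta>]\<close>, i.e. \<open>\<plusminus>\<zeta>\<^sup>j\<close>.\<close>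

lemma unit_normalising_leval_zeta3:
  assumes "x \<in> laurentZ" "y \<in> laurentZ" and norm: "x * lbar x + Phi * y * lbar y = 1"
  obtains u ub where "u * ub = 1" "lbar u = ub" "u \<in> laurentZ" "ub \<in> laurentZ"
    "leval zeta3 (u * x) = 1"
proof -
  have Q: "x \<in> laurentQ" "y \<in> laurentQ" using assms(1,2) by (simp_all add: laurentZ_imp_laurentQ)
  obtain a b :: int where ab: "leval zeta3 x = of_int a + of_int b * zeta3"
    using leval_zeta3_laurentZ assms(1) by blast
  have "leval zeta3 (lbar x) = of_int a + of_int b * cnj zeta3"
    using Q by (simp add: leval_lbar inverse_zeta3 leval_cnj ab)
  then have "(of_int a + of_int b * zeta3) * (of_int a + of_int b * cnj zeta3) = 1"
    using arg_cong[OF norm, of "leval zeta3"] Q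
    by (simp add: leval_add leval_mult leval_zeta3_Phi ab)
  then have "of_int (a * a - a * b + b * b) = (1 :: complex)" by (simp only: eisenstein_norm)
  then have "a * a - a * b + b * b = 1" by (rule of_int_eq_1_iff[THEN iffD1])
  then obtain s :: rat and j :: nat where s: "s = 1 \<or> s = -1"
    and sj: "of_int a + of_int b * zeta3 = of_rat s * zeta3 ^ j"
    by (rule eisenstein_unit)
  show ?thesis
  proof
    show "lmonom s (- int j) * lmonom s (int j) = 1" "lbar (lmonom s (- int j)) = lmonom s (int j)"
      "lmonom s (- int j) \<in> laurentZ" "lmonom s (int j) \<in> laurentZ"
      using s by (auto simp: lmonom_mult_lmonom lmonom_1_0 lbar_lmonom)
    show "leval zeta3 (lmonom s (- int j) * x) = 1"
      using s Q by (auto simp: leval_mult leval_lmonom ab sj power_int_minus)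
  qed
qed

lemma quat_in_phibar_calB:
  assumes "x \<in> laurentZ" "y \<in> laurentZ" and norm: "x * lbar x + Phi * y * lbar y = 1"
  shows "pclass (quat x y) \<in> phibar ` calB"
proof -
  have Q: "x \<in> laurentQ" "y \<in> laurentQ" using assms(1,2) by (simp_all add: laurentZ_imp_laurentQ)
  obtain u ub where u: "u * ub = 1" "lbar u = ub" "u \<in> laurentZ" "ub \<in> laurentZ"
    and "leval zeta3 (u * x) = 1"
    using unit_normalising_leval_zeta3 assms by blast
  then obtain e where e: "e \<in> laurentZ" "(1 + fls_X + fls_X ^ 2) * e = 1 - u * x"
    using cyclo3_dvd_if_leval_zeta3[of "1 - u * x"] assms(1)
    by (force simp: leval_diff laurentZ_imp_laurentQ)
  obtain q1 where q1: "q1 \<in> laurentZ" "(1 + fls_X) * q1 = x + fls_X * lbar x"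
    using one_plus_X_dvd_if_leval_minus_one[of "x + fls_X * lbar x"] assms(1) Q
    by (force simp: leval_add leval_mult leval_lbar)
  obtain q2 where q2: "q2 \<in> laurentZ" "(1 + fls_X) * q2 = lbar y - y"
    using one_plus_X_dvd_if_leval_minus_one[of "lbar y - y"] assms(2) Q
    by (force simp: leval_diff leval_lbar)
  have "u \<noteq> 0" using u(1) by auto
  then show ?thesis
    using lift_matrix_in_calB[OF u assms(1,2) e(1) q1(1) q2(1) e(2) q1(2) q2(2) norm]
      phibar_lift_matrix[OF _ e(2) q1(2) q2(2)]
    by (metis image_eqI)
qed

theorem lemma4p4:
  shows "U1 \<subseteq> phibar ` calB \<inter> PGL2 laurentZ"
proof
  fix X assume X: "X \<in> U1"
  then obtain x y where "x \<in> laurentZ" "y \<in> laurentZ" "x * lbar x + Phi * y * lbar y = 1"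
    and "X = pclass (quat x y)"
    by (rule U1_normal_form)
  then have "X \<in> phibar ` calB" using quat_in_phibar_calB by blast
  moreover have "X \<in> PGL2 laurentZ" using X unfolding U1_def UZ_def by auto
  ultimately show "X \<in> phibar ` calB \<inter> PGL2 laurentZ" by blast
qed

end
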